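(* Let $\beta\in\mathbb{Z}[\mathrm{i}]$ with $|\beta|>1$ and let $(\beta,D)$ be an integral numeration system. Then every eventually periodic configuration $(a_z)_{z\in\mathbb{Z}[\mathrm{i}]}$ is $(\beta,D)$-automatic.
   Context: A configuration is a map from $\mathbb{Z}[\mathrm{i}]$ to a finite set. For finite $D\subset\mathbb{Z}[\mathrm{i}]$ with $0\in D$, a word $w=w_{n-1}\cdots w_0\in D^*$ has value $[w]_\beta=\sum_{j}w_j\beta^j$; $(\beta,D)$ is an integral numeration system if every Gaussian integer has a unique such expansion (up to leading zeros). A configuration is $(\beta,D)$-automatic if there is a deterministic finite automaton with output $(S,D,\delta,s_0,A,\tau)$ (transition map extended to words by $\delta(s,wa)=\delta(\delta(s,w),a)$) with $a_z=\tau(\delta(s_0,w))$ for every $w\in D^*$ with $[w]_\beta=z$. A configuration is eventually periodic if there exist $\mathbb{Z}$-linearly independent $p,q\in\mathbb{Z}[\mathrm{i}]$ and a finite set $F$ with $a_z=a_{z+p}=a_{z+q}$ for all $z\in\mathbb{Z}[\mathrm{i}]\setminus F$. *)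

theory Defs
  imports Complex_Main
begin

definition gauss_ints :: "complex set" where
  "gauss_ints = {z. Re z \<in> \<int> \<and> Im z \<in> \<int>}"

text \<open>A word \<open>w = w_{n-1} \<dots> w_0\<close> is the list \<open>[w_{n-1}, \<dots>, w_0]\<close> (reading order,
  most significant digit first); its value is \<open>\<Sum>j. w_j \<beta>^j\<close>.\<close>
definition word_val :: "complex \<Rightarrow> complex list \<Rightarrow> complex" where
  "word_val \<beta> w = (\<Sum>j<length w. rev w ! j * \<beta> ^ j)"

definition integral_numeration_system :: "complex \<Rightarrow> complex set \<Rightarrow> bool" where
  "integral_numeration_system \<beta> D \<longleftrightarrow>
     \<beta> \<in> gauss_ints \<and> finite D \<and> D \<subseteq> gauss_ints \<and> 0 \<in> D \<and>
     (\<forall>z\<in>gauss_ints. \<exists>w\<in>lists D. word_val \<beta> w = z) \<and>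
     (\<forall>w\<in>lists D. \<forall>w'\<in>lists D. word_val \<beta> w = word_val \<beta> w' \<longrightarrow>
        dropWhile (\<lambda>d. d = 0) w = dropWhile (\<lambda>d. d = 0) w')"

text \<open>Deterministic finite automaton with output (states coded as naturals, finite state set S,
  input alphabet D, transition \<delta>, initial state s0, output map \<tau>; output alphabet \<tau> ` S).
  The extended transition map \<open>\<delta>(s, wa) = \<delta>(\<delta>(s,w),a)\<close> is \<open>foldl \<delta> s w\<close>.\<close>
definition automatic :: "complex \<Rightarrow> complex set \<Rightarrow> (complex \<Rightarrow> 'b) \<Rightarrow> bool" where
  "automatic \<beta> D a \<longleftrightarrow>
     (\<exists>(S :: nat set) \<delta> s0 (\<tau> :: nat \<Rightarrow> 'b).
        finite S \<and> s0 \<in> S \<and> (\<forall>s\<in>S. \<forall>d\<in>D. \<delta> s d \<in> S) \<and>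
        (\<forall>w\<in>lists D. a (word_val \<beta> w) = \<tau> (foldl \<delta> s0 w)))"

definition eventually_periodic :: "(complex \<Rightarrow> 'b) \<Rightarrow> bool" where
  "eventually_periodic a \<longleftrightarrow>
     (\<exists>p\<in>gauss_ints. \<exists>q\<in>gauss_ints. \<exists>F.
        (\<forall>m n :: int. of_int m * p + of_int n * q = 0 \<longrightarrow> m = 0 \<and> n = 0) \<and>
        finite F \<and>
        (\<forall>z\<in>gauss_ints - F. a z = a (z + p) \<and> a z = a (z + q)))"

end

theory Submission
  imports Defs
begin

text \<open>
  Let \<open>p, q\<close> be the periods of \<open>a\<close> and \<open>\<Delta> = det(p, q) \<noteq> 0\<close>. Following \<open>a\<close> far along
  the ray \<open>z + \<nat> p\<close> yields a configuration that is periodic under the lattice \<open>\<int>p + \<int>q\<close>,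
  hence under \<open>\<Delta> \<int>[i]\<close>, and that agrees with \<open>a\<close> outside a ball. Reading a word digit by digit
  applies the maps \<open>v \<mapsto> \<beta> v + d\<close>, which respect congruence modulo \<open>\<Delta>\<close> and, as \<open>|\<beta>| > 1\<close>, never
  re-enter a large enough ball once they have left it. So the automaton remembers the value itself
  while it is inside the ball and only its residue modulo \<open>\<Delta>\<close> afterwards: finitely many states.
\<close>

lemma gauss_ints_add [intro]: "x \<in> gauss_ints \<Longrightarrow> y \<in> gauss_ints \<Longrightarrow> x + y \<in> gauss_ints"
  and gauss_ints_diff [intro]: "x \<in> gauss_ints \<Longrightarrow> y \<in> gauss_ints \<Longrightarrow> x - y \<in> gauss_ints"
  and gauss_ints_uminus [intro]: "x \<in> gauss_ints \<Longrightarrow> - x \<in> gauss_ints"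
  and gauss_ints_mult [intro]: "x \<in> gauss_ints \<Longrightarrow> y \<in> gauss_ints \<Longrightarrow> x * y \<in> gauss_ints"
  and gauss_ints_cnj [intro]: "x \<in> gauss_ints \<Longrightarrow> cnj x \<in> gauss_ints"
  and gauss_ints_of_int [intro]: "of_int m \<in> gauss_ints"
  and gauss_ints_of_nat [intro]: "of_nat n \<in> gauss_ints"
  and gauss_ints_0 [intro]: "0 \<in> gauss_ints"
  by (auto simp: gauss_ints_def)

lemma gauss_intsE:
  assumes "v \<in> gauss_ints"
  obtains x y :: int where "v = Complex (of_int x) (of_int y)"
proof -
  from assms obtain x y where "Re v = of_int x" "Im v = of_int y"
    by (auto simp: gauss_ints_def elim!: Ints_cases)
  then show ?thesis using that[of x y] by (simp add: complex_eq_iff)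
qed

lemma gauss_ints_Re_Ints: "z \<in> gauss_ints \<Longrightarrow> Re z \<in> \<int>"
  and gauss_ints_Im_Ints: "z \<in> gauss_ints \<Longrightarrow> Im z \<in> \<int>"
  by (simp_all only: gauss_ints_def mem_Collect_eq)

lemma finite_gauss_ints_cball: "finite {v \<in> gauss_ints. cmod v \<le> R}"
proof -
  define C where "C = \<lceil>R\<rceil>"
  have "{v \<in> gauss_ints. cmod v \<le> R} \<subseteq> (\<lambda>(x, y). Complex (of_int x) (of_int y)) ` ({-C..C} \<times> {-C..C})"
  proof
    fix v assume v: "v \<in> {v \<in> gauss_ints. cmod v \<le> R}"
    then obtain x y :: int where xy: "v = Complex (of_int x) (of_int y)"
      by (auto elim: gauss_intsE)
    have "\<bar>real_of_int x\<bar> \<le> R" "\<bar>real_of_int y\<bar> \<le> R"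
      using v abs_Re_le_cmod[of v] abs_Im_le_cmod[of v] by (auto simp: xy)
    then have "x \<in> {-C..C}" "y \<in> {-C..C}"
      unfolding C_def by (auto simp: abs_le_iff) linarith+
    then show "v \<in> (\<lambda>(x, y). Complex (of_int x) (of_int y)) ` ({-C..C} \<times> {-C..C})"
      using xy by force
  qed
  then show ?thesis by (rule finite_subset) auto
qed

definition gauss_residue :: "int \<Rightarrow> complex \<Rightarrow> int \<times> int" where
  "gauss_residue N v = (\<lfloor>Re v\<rfloor> mod N, \<lfloor>Im v\<rfloor> mod N)"

lemma gauss_residue_eq_iff:
  assumes "v \<in> gauss_ints" and "v' \<in> gauss_ints"
  shows "gauss_residue N v = gauss_residue N v' \<longleftrightarrow> (\<exists>w\<in>gauss_ints. v' - v = of_int N * w)"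
proof -
  obtain x y where v: "v = Complex (of_int x) (of_int y)" using assms(1) by (rule gauss_intsE)
  obtain x' y' where v': "v' = Complex (of_int x') (of_int y')" using assms(2) by (rule gauss_intsE)
  have "gauss_residue N v = gauss_residue N v' \<longleftrightarrow> N dvd x' - x \<and> N dvd y' - y"
    by (auto simp: gauss_residue_def v v' mod_eq_dvd_iff dvd_diff_commute)
  also have "\<dots> \<longleftrightarrow> (\<exists>s t. x' - x = N * s \<and> y' - y = N * t)"
    by (auto simp: dvd_def)
  also have "\<dots> \<longleftrightarrow> (\<exists>w\<in>gauss_ints. v' - v = of_int N * w)"
  proof
    assume "\<exists>s t. x' - x = N * s \<and> y' - y = N * t"
    then obtain s t where "x' - x = N * s" "y' - y = N * t" by blast
    then have "v' - v = of_int N * Complex (of_int s) (of_int t)"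
      by (simp add: v v' complex_eq_iff flip: of_int_diff of_int_mult)
    then show "\<exists>w\<in>gauss_ints. v' - v = of_int N * w"
      by (intro bexI[of _ "Complex (of_int s) (of_int t)"]) (auto simp: gauss_ints_def)
  next
    assume "\<exists>w\<in>gauss_ints. v' - v = of_int N * w"
    then obtain w where "w \<in> gauss_ints" and w: "v' - v = of_int N * w" by blast
    from \<open>w \<in> gauss_ints\<close> obtain s t where "w = Complex (of_int s) (of_int t)" by (rule gauss_intsE)
    with w have "x' - x = N * s \<and> y' - y = N * t"
      by (simp add: v v' complex_eq_iff flip: of_int_diff of_int_mult)
    then show "\<exists>s t. x' - x = N * s \<and> y' - y = N * t" by blast
  qed
  finally show ?thesis .
qed

lemma gauss_residue_affine:
  assumes "\<beta> \<in> gauss_ints" "d \<in> gauss_ints" "v \<in> gauss_ints" "v' \<in> gauss_ints"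
    and "gauss_residue N v = gauss_residue N v'"
  shows "gauss_residue N (\<beta> * v + d) = gauss_residue N (\<beta> * v' + d)"
proof -
  obtain w where "w \<in> gauss_ints" "v' - v = of_int N * w"
    using assms by (auto simp: gauss_residue_eq_iff)
  then have "\<beta> * w \<in> gauss_ints" "(\<beta> * v' + d) - (\<beta> * v + d) = of_int N * (\<beta> * w)"
    using assms(1) by (auto simp: algebra_simps simp flip: right_diff_distrib)
  then show ?thesis using assms by (subst gauss_residue_eq_iff) auto
qed

lemma finite_range_gauss_residue:
  assumes "N \<noteq> 0"
  shows "finite (range (gauss_residue N))"
proof -
  have "k mod N \<in> {-\<bar>N\<bar>..\<bar>N\<bar>}" for k
    using abs_mod_less[OF assms, of k] by (simp add: abs_le_iff abs_less_iff)
  then have "range (gauss_residue N) \<subseteq> {-\<bar>N\<bar>..\<bar>N\<bar>} \<times> {-\<bar>N\<bar>..\<bar>N\<bar>}"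
    by (auto simp: gauss_residue_def)
  then show ?thesis by (rule finite_subset) auto
qed

text \<open>Cramer's rule: \<open>Im (cnj p * q)\<close> is the determinant of \<open>p\<close> and \<open>q\<close> as vectors of \<open>\<real>\<^sup>2\<close>.\<close>
lemma det_mult_eq_lattice_comb:
  "of_real (Im (cnj p * q)) * w = of_real (Im (cnj w * q)) * p + of_real (Im (cnj p * w)) * q"
  by (simp add: complex_eq_iff algebra_simps)

lemma det_nonzero_if_independent:
  assumes "p \<in> gauss_ints" "q \<in> gauss_ints"
    and independent: "\<And>m n :: int. of_int m * p + of_int n * q = 0 \<Longrightarrow> m = 0 \<and> n = 0"
  shows "Im (cnj p * q) \<noteq> 0"
proof
  assume det: "Im (cnj p * q) = 0"
  obtain m n where m: "Re (cnj p * q) = of_int m" and n: "Re (cnj p * p) = of_int n"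
    using gauss_ints_Re_Ints[of "cnj p * q"] gauss_ints_Re_Ints[of "cnj p * p"] assms(1,2)
    by (blast elim: Ints_cases)
  have "of_real (Re (cnj p * q)) * p - of_real (Re (cnj p * p)) * q = 0"
    using det by (simp add: complex_eq_iff algebra_simps)
  then have "of_int m * p + of_int (- n) * q = 0"
    unfolding m n by simp
  then have "m = 0 \<and> - n = 0" by (rule independent)
  then have "n = 0" by simp
  then have "Re (cnj p * p) = 0" using n by simp
  then have "p = 0" by (simp add: complex_eq_iff sum_squares_eq_zero_iff flip: power2_eq_square)
  then show False using independent[of 1 0] by simp
qed

lemma word_val_Nil [simp]: "word_val \<beta> [] = 0"
  by (simp add: word_val_def)

lemma word_val_snoc [simp]: "word_val \<beta> (w @ [d]) = \<beta> * word_val \<beta> w + d"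
proof -
  have "word_val \<beta> (w @ [d]) = (\<Sum>j<Suc (length w). (d # rev w) ! j * \<beta> ^ j)"
    by (simp add: word_val_def)
  also have "\<dots> = d + (\<Sum>j<length w. rev w ! j * \<beta> ^ Suc j)"
    by (subst sum.lessThan_Suc_shift) simp
  also have "\<dots> = \<beta> * word_val \<beta> w + d"
    by (simp add: word_val_def sum_distrib_left mult_ac)
  finally show ?thesis .
qed

lemma word_val_in_gauss_ints:
  assumes "\<beta> \<in> gauss_ints" "D \<subseteq> gauss_ints" "w \<in> lists D"
  shows "word_val \<beta> w \<in> gauss_ints"
  using assms(3) by (induction w rule: rev_induct) (use assms(1,2) in auto)

lemma automatic_if_finite_invariant:
  fixes K :: "complex \<Rightarrow> 'k" and a :: "complex \<Rightarrow> 'b"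
  assumes \<beta>: "\<beta> \<in> gauss_ints" and D: "D \<subseteq> gauss_ints"
    and finite_K: "finite (K ` gauss_ints)"
    and K_step: "\<And>v v' d. v \<in> gauss_ints \<Longrightarrow> v' \<in> gauss_ints \<Longrightarrow> d \<in> D \<Longrightarrow> K v = K v' \<Longrightarrow>
        K (\<beta> * v + d) = K (\<beta> * v' + d)"
    and K_output: "\<And>v v'. v \<in> gauss_ints \<Longrightarrow> v' \<in> gauss_ints \<Longrightarrow> K v = K v' \<Longrightarrow> a v = a v'"
  shows "automatic \<beta> D a"
proof -
  obtain code :: "'k \<Rightarrow> nat" where code: "inj_on code (K ` gauss_ints)"
    using finite_imp_inj_to_nat_seg[OF finite_K] by blast
  define state where "state v = code (K v)" for v
  define rep where "rep s = (SOME v. v \<in> gauss_ints \<and> state v = s)" for s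
  have rep: "rep (state v) \<in> gauss_ints \<and> K (rep (state v)) = K v" if "v \<in> gauss_ints" for v
  proof -
    have "rep (state v) \<in> gauss_ints \<and> state (rep (state v)) = state v"
      unfolding rep_def by (rule someI) (use that in blast)
    then show ?thesis using code that unfolding state_def by (auto dest: inj_onD)
  qed
  define \<delta> where "\<delta> s d = state (\<beta> * rep s + d)" for s d
  have \<delta>: "\<delta> (state v) d = state (\<beta> * v + d)" if "v \<in> gauss_ints" "d \<in> D" for v d
    using rep[OF that(1)] K_step[of "rep (state v)" v d] that unfolding \<delta>_def state_def by auto
  have run: "foldl \<delta> (state 0) w = state (word_val \<beta> w)" if "w \<in> lists D" for w
    using that by (induction w rule: rev_induct) (auto simp: \<delta> word_val_in_gauss_ints[OF \<beta> D])
  have "finite (state ` gauss_ints)"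
    using finite_K unfolding state_def by (metis finite_imageI image_image)
  moreover have "\<forall>s\<in>state ` gauss_ints. \<forall>d\<in>D. \<delta> s d \<in> state ` gauss_ints"
    using \<delta> \<beta> D by (auto intro!: imageI)
  moreover have "a (word_val \<beta> w) = a (rep (foldl \<delta> (state 0) w))" if "w \<in> lists D" for w
    using rep K_output word_val_in_gauss_ints[OF \<beta> D that] unfolding run[OF that] by metis
  ultimately show ?thesis
    unfolding automatic_def by (intro exI[of _ "state ` gauss_ints"] exI[of _ \<delta>] exI[of _ "state 0"]) auto
qed

lemma digit_map_escapes:
  assumes "1 < cmod \<beta>" and "finite D"
  obtains R' where "R \<le> R'" and "\<And>v d. d \<in> D \<Longrightarrow> R' < cmod v \<Longrightarrow> R' < cmod (\<beta> * v + d)"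
proof
  define M where "M = (\<Sum>d\<in>D. cmod d)"
  show "R \<le> max R (M / (cmod \<beta> - 1))" by simp
  fix v d assume d: "d \<in> D" and v: "max R (M / (cmod \<beta> - 1)) < cmod v"
  have "cmod d \<le> M" unfolding M_def by (rule member_le_sum) (use assms(2) d in auto)
  moreover have "M < (cmod \<beta> - 1) * cmod v" using v assms(1) by (simp add: field_simps)
  moreover have "cmod \<beta> * cmod v - cmod d \<le> cmod (\<beta> * v + d)"
    using norm_triangle_ineq4[of "\<beta> * v + d" d] by (simp add: norm_mult)
  ultimately show "max R (M / (cmod \<beta> - 1)) < cmod (\<beta> * v + d)"
    using v by (simp add: algebra_simps)
qed

lemma automatic_if_residue_determined_far:
  fixes a :: "complex \<Rightarrow> 'b" and N :: int
  assumes \<beta>: "\<beta> \<in> gauss_ints" "1 < cmod \<beta>" and D: "D \<subseteq> gauss_ints" "finite D" and "N \<noteq> 0"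
    and far: "\<And>v v'. v \<in> gauss_ints \<Longrightarrow> v' \<in> gauss_ints \<Longrightarrow> R < cmod v \<Longrightarrow> R < cmod v' \<Longrightarrow>
        gauss_residue N v = gauss_residue N v' \<Longrightarrow> a v = a v'"
  shows "automatic \<beta> D a"
proof -
  obtain R' where "R \<le> R'" and escape: "\<And>v d. d \<in> D \<Longrightarrow> R' < cmod v \<Longrightarrow> R' < cmod (\<beta> * v + d)"
    using digit_map_escapes[OF \<beta>(2) D(2)] by blast
  define K where "K v = (if cmod v \<le> R' then Inl v else Inr (gauss_residue N v))" for v
  have K_eq: "v = v' \<or> R' < cmod v \<and> R' < cmod v' \<and> gauss_residue N v = gauss_residue N v'"
    if "K v = K v'" for v v'
    using that by (auto simp: K_def split: if_splits)
  show ?thesis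
  proof (rule automatic_if_finite_invariant[OF \<beta>(1) D(1), of K])
    have "K ` gauss_ints \<subseteq> Inl ` {v \<in> gauss_ints. cmod v \<le> R'} \<union> Inr ` range (gauss_residue N)"
      by (auto simp: K_def)
    then show "finite (K ` gauss_ints)"
      by (rule finite_subset) (simp add: finite_gauss_ints_cball finite_range_gauss_residue \<open>N \<noteq> 0\<close>)
  next
    fix v v' d assume v: "v \<in> gauss_ints" "v' \<in> gauss_ints" and d: "d \<in> D" and "K v = K v'"
    then consider "v = v'" | "R' < cmod v" "R' < cmod v'" "gauss_residue N v = gauss_residue N v'"
      using K_eq by blast
    then show "K (\<beta> * v + d) = K (\<beta> * v' + d)"
    proof cases
      case 2
      have "gauss_residue N (\<beta> * v + d) = gauss_residue N (\<beta> * v' + d)"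
        using gauss_residue_affine[OF \<beta>(1) subsetD[OF D(1) d] v 2(3)] .
      moreover have "R' < cmod (\<beta> * v + d)" "R' < cmod (\<beta> * v' + d)"
        using escape[OF d 2(1)] escape[OF d 2(2)] .
      ultimately show ?thesis by (simp add: K_def)
    qed simp
  next
    fix v v' assume v: "v \<in> gauss_ints" "v' \<in> gauss_ints" and "K v = K v'"
    from K_eq[OF this(3)] show "a v = a v'" using far[OF v] \<open>R \<le> R'\<close> by auto
  qed
qed

lemma shift_invariant_int_multiples:
  assumes invariant: "\<And>z. z \<in> gauss_ints \<Longrightarrow> f (z + u) = f z"
    and "u \<in> gauss_ints" "z \<in> gauss_ints"
  shows "f (z + of_int m * u) = f z"
proof (induction m rule: int_induct[where k = 0])
  case base show ?case by simp
next
  case (step1 i)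
  have "f (z + of_int (i + 1) * u) = f ((z + of_int i * u) + u)" by (simp add: algebra_simps)
  also have "\<dots> = f (z + of_int i * u)"
    by (intro invariant gauss_ints_add gauss_ints_mult gauss_ints_of_int assms(2,3))
  finally show ?case using step1 by simp
next
  case (step2 i)
  have "f (z + of_int i * u) = f ((z + of_int (i - 1) * u) + u)" by (simp add: algebra_simps)
  also have "\<dots> = f (z + of_int (i - 1) * u)"
    by (intro invariant gauss_ints_add gauss_ints_mult gauss_ints_of_int assms(2,3))
  finally show ?case using step2 by simp
qed

lemma norm_le_if_between:
  fixes v u :: complex
  assumes "cmod (v + of_nat j * u) \<le> r" "cmod (v - of_nat i * u) \<le> r" "0 < i + j"
  shows "cmod v \<le> r"
proof -
  have convex_comb: "of_nat (i + j) * v = of_nat i * (v + of_nat j * u) + of_nat j * (v - of_nat i * u)"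
    by (simp add: algebra_simps)
  have "real (i + j) * cmod v = cmod (of_nat (i + j) * v)"
    by (simp only: norm_mult norm_of_nat)
  also have "\<dots> \<le> cmod (of_nat i * (v + of_nat j * u)) + cmod (of_nat j * (v - of_nat i * u))"
    unfolding convex_comb by (rule norm_triangle_ineq)
  also have "\<dots> = real i * cmod (v + of_nat j * u) + real j * cmod (v - of_nat i * u)"
    by (simp add: norm_mult)
  also have "\<dots> \<le> real i * r + real j * r"
    using assms(1,2) by (intro add_mono mult_left_mono) auto
  finally have "real (i + j) * cmod v \<le> real (i + j) * r"
    by (simp add: distrib_right)
  then show ?thesis using assms(3) by simp
qed

locale eventually_periodic_config =
  fixes a :: "complex \<Rightarrow> 'b" and p q :: complex and F :: "complex set"
  assumes p_gauss: "p \<in> gauss_ints" and q_gauss: "q \<in> gauss_ints" and finite_F: "finite F"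
    and periodic_off_F: "\<And>z. z \<in> gauss_ints \<Longrightarrow> z \<notin> F \<Longrightarrow> a (z + p) = a z \<and> a (z + q) = a z"
    and independent: "\<And>m n :: int. of_int m * p + of_int n * q = 0 \<Longrightarrow> m = 0 \<and> n = 0"
begin

definition ray_direction :: "complex \<Rightarrow> bool" where
  "ray_direction P \<longleftrightarrow> P \<noteq> 0 \<and> P \<in> gauss_ints \<and>
     (\<forall>w\<in>gauss_ints. w \<notin> F \<longrightarrow> w + P \<notin> F \<longrightarrow> a (w + P) = a w)"

lemma ray_direction_p: "ray_direction p"
  using independent[of 1 0] p_gauss periodic_off_F by (auto simp: ray_direction_def)

lemma ray_direction_uminus_p: "ray_direction (- p)"
proof -
  have "a (w - p) = a w" if "w \<in> gauss_ints" "w - p \<notin> F" for w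
    using periodic_off_F[OF gauss_ints_diff[OF that(1) p_gauss] that(2)] by simp
  then show ?thesis using independent[of 1 0] p_gauss by (auto simp: ray_direction_def)
qed

lemma ray_directionD:
  assumes "ray_direction P"
  shows "P \<noteq> 0" "P \<in> gauss_ints" "\<And>w. w \<in> gauss_ints \<Longrightarrow> w \<notin> F \<Longrightarrow> w + P \<notin> F \<Longrightarrow> a (w + P) = a w"
  using assms by (auto simp: ray_direction_def)

lemma ray_eventually_avoids_F:
  assumes "P \<noteq> 0"
  shows "\<exists>J. \<forall>j\<ge>J. z + of_nat j * P \<notin> F"
proof -
  have "inj (\<lambda>j::nat. z + of_nat j * P)" using assms by (auto intro!: injI)
  then have "finite {j. z + of_nat j * P \<in> F}"
    using finite_vimageI[OF finite_F] by (simp add: vimage_def)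
  then obtain B where "\<forall>j\<in>{j. z + of_nat j * P \<in> F}. j \<le> B"
    using finite_nat_set_iff_bounded_le by blast
  then show ?thesis by (intro exI[of _ "Suc B"]) force
qed

text \<open>For \<open>P = p\<close> this is the periodic configuration that \<open>a\<close> agrees with outside a bounded set.\<close>
definition ray_limit :: "complex \<Rightarrow> complex \<Rightarrow> 'b" where
  "ray_limit P z = a (z + of_nat (SOME J. \<forall>j\<ge>J. z + of_nat j * P \<notin> F) * P)"

lemma constant_on_clear_ray:
  assumes P: "ray_direction P" and z: "z \<in> gauss_ints"
    and clear: "\<forall>i\<ge>j. z + of_nat i * P \<notin> F" and "j \<le> k"
  shows "a (z + of_nat k * P) = a (z + of_nat j * P)"
  using \<open>j \<le> k\<close>
proof (induction k rule: dec_induct)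
  case (step k)
  have "z + of_nat k * P \<in> gauss_ints" using P z by (auto simp: ray_direction_def)
  moreover have "z + of_nat k * P \<notin> F" "z + of_nat k * P + P \<notin> F"
    using clear step(1) by (auto simp: algebra_simps dest: spec[of _ "Suc k"])
  ultimately have "a (z + of_nat k * P + P) = a (z + of_nat k * P)"
    using P by (auto simp: ray_direction_def)
  then show ?case using step(3) by (simp add: algebra_simps)
qed simp

lemma ray_limit_eq:
  assumes P: "ray_direction P" and z: "z \<in> gauss_ints" and clear: "\<forall>i\<ge>j. z + of_nat i * P \<notin> F"
  shows "ray_limit P z = a (z + of_nat j * P)"
proof -
  define J where "J = (SOME J. \<forall>j\<ge>J. z + of_nat j * P \<notin> F)"
  have "\<forall>i\<ge>J. z + of_nat i * P \<notin> F"
    unfolding J_def by (rule someI_ex, rule ray_eventually_avoids_F) (use P in \<open>simp add: ray_direction_def\<close>)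
  then have "a (z + of_nat (max j J) * P) = a (z + of_nat J * P)"
    by (intro constant_on_clear_ray[OF P z]) auto
  moreover have "a (z + of_nat (max j J) * P) = a (z + of_nat j * P)"
    by (intro constant_on_clear_ray[OF P z clear]) auto
  ultimately show ?thesis unfolding ray_limit_def J_def[symmetric] by simp
qed

lemma ray_limit_shift_direction:
  assumes P: "ray_direction P" and z: "z \<in> gauss_ints"
  shows "ray_limit P (z + P) = ray_limit P z"
proof -
  obtain J where J: "\<forall>j\<ge>J. z + of_nat j * P \<notin> F"
    using ray_eventually_avoids_F[OF ray_directionD(1)[OF P]] by blast
  have shift: "z + P + of_nat i * P = z + of_nat (Suc i) * P" for i by (simp add: algebra_simps)
  have "\<forall>i\<ge>J. z + P + of_nat i * P \<notin> F" unfolding shift using J le_SucI by blast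
  then have "ray_limit P (z + P) = a (z + P + of_nat J * P)"
    using ray_limit_eq[OF P] z ray_directionD(2)[OF P] by blast
  also have "\<dots> = a (z + of_nat (Suc J) * P)" by (simp only: shift)
  also have "\<dots> = ray_limit P z"
    using ray_limit_eq[OF P z, of "Suc J"] J by simp
  finally show ?thesis .
qed

lemma ray_limit_shift_q:
  assumes P: "ray_direction P" and z: "z \<in> gauss_ints"
  shows "ray_limit P (z + q) = ray_limit P z"
proof -
  obtain J1 J2 where J1: "\<forall>j\<ge>J1. z + of_nat j * P \<notin> F" and J2: "\<forall>j\<ge>J2. z + q + of_nat j * P \<notin> F"
    using ray_eventually_avoids_F[OF ray_directionD(1)[OF P]] by meson
  define J where "J = max J1 J2"
  have "z + of_nat J * P \<in> gauss_ints" "z + of_nat J * P \<notin> F"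
    using P z J1 by (auto simp: ray_direction_def J_def)
  then have "a (z + of_nat J * P + q) = a (z + of_nat J * P)" using periodic_off_F by blast
  moreover have "ray_limit P (z + q) = a (z + q + of_nat J * P)"
    using ray_limit_eq[OF P, of "z + q" J] J2 z q_gauss by (auto simp: J_def)
  moreover have "ray_limit P z = a (z + of_nat J * P)"
    using ray_limit_eq[OF P z, of J] J1 by (auto simp: J_def)
  ultimately show ?thesis by (simp add: algebra_simps)
qed

lemma ray_limit_lattice_periodic:
  assumes z: "z \<in> gauss_ints"
  shows "ray_limit p (z + of_int m * p + of_int n * q) = ray_limit p z"
proof -
  have "ray_limit p (z + of_int m * p + of_int n * q) = ray_limit p (z + of_int m * p)"
    using z p_gauss q_gauss
    by (intro shift_invariant_int_multiples ray_limit_shift_q[OF ray_direction_p]) auto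
  also have "\<dots> = ray_limit p z"
    using z p_gauss by (intro shift_invariant_int_multiples ray_limit_shift_direction[OF ray_direction_p])
  finally show ?thesis .
qed

text \<open>By independence the lines \<open>z + M q + \<int> p\<close> are pairwise disjoint, so only finitely many meet \<open>F\<close>.\<close>
lemma line_avoiding_F: "\<exists>M::nat. \<forall>j::int. z + of_nat M * q + of_int j * p \<notin> F"
proof -
  define S where "S = {M::nat. \<exists>j::int. z + of_nat M * q + of_int j * p \<in> F}"
  define hit where "hit M = (SOME f. f \<in> F \<and> (\<exists>j::int. z + of_nat M * q + of_int j * p = f))" for M
  have hit: "hit M \<in> F \<and> (\<exists>j::int. z + of_nat M * q + of_int j * p = hit M)" if "M \<in> S" for M
    unfolding hit_def by (rule someI_ex) (use that in \<open>auto simp: S_def\<close>)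
  have "inj_on hit S"
  proof (rule inj_onI)
    fix M M' assume "M \<in> S" "M' \<in> S" "hit M = hit M'"
    then obtain j j' where eq: "z + of_nat M * q + of_int j * p = z + of_nat M' * q + of_int j' * p"
      using hit by metis
    have "of_int (j - j') * p + of_int (int M - int M') * q
        = (z + of_nat M * q + of_int j * p) - (z + of_nat M' * q + of_int j' * p)"
      by (simp add: algebra_simps)
    then have "of_int (j - j') * p + of_int (int M - int M') * q = 0" by (simp only: eq diff_self)
    then show "M = M'" using independent by fastforce
  qed
  moreover have "hit ` S \<subseteq> F" using hit by blast
  ultimately have "finite S" using finite_F by (rule inj_on_finite)
  then obtain M where "M \<notin> S" using ex_new_if_finite[OF infinite_UNIV_nat] by blast
  then show ?thesis unfolding S_def by blast
qed

lemma ray_limit_uminus_p: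
  assumes z: "z \<in> gauss_ints"
  shows "ray_limit (- p) z = ray_limit p z"
proof -
  obtain M where M: "\<forall>j::int. z + of_nat M * q + of_int j * p \<notin> F" using line_avoiding_F by blast
  define z' where "z' = z + of_nat M * q"
  have z': "z' \<in> gauss_ints" using z q_gauss by (auto simp: z'_def)
  have clear: "z' + of_nat i * p \<notin> F" "z' + of_nat i * (- p) \<notin> F" for i
    using M[rule_format, of "int i"] M[rule_format, of "- int i"] by (simp_all add: z'_def)
  have to_z: "ray_limit P z' = ray_limit P z" if "ray_direction P" for P
  proof -
    have "ray_limit P (z + of_int (int M) * q) = ray_limit P z"
      using z q_gauss by (intro shift_invariant_int_multiples ray_limit_shift_q[OF that])
    then show ?thesis by (simp add: z'_def)
  qed
  have "ray_limit p z' = a z'"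
    using ray_limit_eq[OF ray_direction_p z', of 0] clear(1) by simp
  moreover have "ray_limit (- p) z' = a z'"
    using ray_limit_eq[OF ray_direction_uminus_p z', of 0] clear(2) by simp
  ultimately show ?thesis
    using to_z[OF ray_direction_p] to_z[OF ray_direction_uminus_p] by simp
qed

text \<open>If the ray from \<open>v\<close> in direction \<open>p\<close> meets \<open>F\<close>, the opposite ray cannot, since \<open>v\<close> lies
  outside a ball containing \<open>F\<close>; on that ray \<open>a\<close> is constant.\<close>
lemma ray_limit_eq_far:
  assumes v: "v \<in> gauss_ints" and F_bound: "\<And>f. f \<in> F \<Longrightarrow> cmod f \<le> r" and far: "r < cmod v"
  shows "a v = ray_limit p v"
proof (cases "\<forall>j. v + of_nat j * p \<notin> F")
  case True
  then show ?thesis using ray_limit_eq[OF ray_direction_p v, of 0] by simp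
next
  case False
  then obtain j where j: "v + of_nat j * p \<in> F" by blast
  have back_clear: "v + of_nat i * (- p) \<notin> F" if "1 \<le> i" for i
    using norm_le_if_between[of v j p r i] F_bound[OF j] F_bound far that by force
  have "ray_limit (- p) v = a (v + of_nat 1 * (- p))"
    using ray_limit_eq[OF ray_direction_uminus_p v, of 1] back_clear by simp
  also have "\<dots> = a v"
    using periodic_off_F[OF gauss_ints_diff[OF v p_gauss]] back_clear[of 1] by simp
  finally show ?thesis using ray_limit_uminus_p[OF v] by simp
qed

end

lemma eventually_periodic_residue_determined_far:
  assumes "eventually_periodic a"
  obtains N :: int and R where "N \<noteq> 0"
    and "\<And>v v'. v \<in> gauss_ints \<Longrightarrow> v' \<in> gauss_ints \<Longrightarrow> R < cmod v \<Longrightarrow> R < cmod v' \<Longrightarrow>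
           gauss_residue N v = gauss_residue N v' \<Longrightarrow> a v = a v'"
proof -
  obtain p q F where "p \<in> gauss_ints" "q \<in> gauss_ints" "finite F"
    and "\<forall>m n :: int. of_int m * p + of_int n * q = 0 \<longrightarrow> m = 0 \<and> n = 0"
    and "\<forall>z\<in>gauss_ints - F. a z = a (z + p) \<and> a z = a (z + q)"
    using assms unfolding eventually_periodic_def by blast
  then interpret eventually_periodic_config a p q F
    by unfold_locales (simp_all, metis DiffI)
  define R where "R = (\<Sum>f\<in>F. cmod f)"
  have F_bound: "cmod f \<le> R" if "f \<in> F" for f
    unfolding R_def by (rule member_le_sum) (use finite_F that in auto)
  obtain N where N: "Im (cnj p * q) = of_int N"
    using gauss_ints_Im_Ints[of "cnj p * q"] p_gauss q_gauss by (blast elim: Ints_cases)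
  have "N \<noteq> 0"
    using det_nonzero_if_independent[OF p_gauss q_gauss independent] N by simp
  moreover have "a v = a v'"
    if v: "v \<in> gauss_ints" "R < cmod v" and v': "v' \<in> gauss_ints" "R < cmod v'"
      and residue: "gauss_residue N v = gauss_residue N v'" for v v'
  proof -
    obtain w where w: "w \<in> gauss_ints" "v' - v = of_int N * w"
      using residue gauss_residue_eq_iff[OF v(1) v'(1)] by blast
    obtain m n where m: "Im (cnj w * q) = of_int m" and n: "Im (cnj p * w) = of_int n"
      using gauss_ints_Im_Ints[of "cnj w * q"] gauss_ints_Im_Ints[of "cnj p * w"] w(1) p_gauss q_gauss
      by (blast elim: Ints_cases)
    have "of_int N * w = of_int m * p + of_int n * q"
      using det_mult_eq_lattice_comb[of p q w] unfolding N m n by simp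
    then have v'_eq: "v' = v + of_int m * p + of_int n * q"
      using w(2) by (simp add: add.assoc) (metis add.commute diff_add_cancel)
    have "a v = ray_limit p v" by (rule ray_limit_eq_far[OF v(1) F_bound v(2)])
    also have "\<dots> = ray_limit p v'"
      unfolding v'_eq by (rule ray_limit_lattice_periodic[OF v(1), symmetric])
    also have "\<dots> = a v'" by (rule ray_limit_eq_far[OF v'(1) F_bound v'(2), symmetric])
    finally show ?thesis .
  qed
  ultimately show ?thesis using that by blast
qed

theorem lemma5p1:
  fixes \<beta> :: complex and D :: "complex set" and a :: "complex \<Rightarrow> 'b"
  assumes "\<beta> \<in> gauss_ints" and "cmod \<beta> > 1"
    and "integral_numeration_system \<beta> D"
    and "finite (a ` gauss_ints)"
    and "eventually_periodic a"
  shows "automatic \<beta> D a"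
proof -
  have "D \<subseteq> gauss_ints" "finite D"
    using assms(3) by (auto simp: integral_numeration_system_def)
  moreover obtain N :: int and R where "N \<noteq> 0"
    and "\<And>v v'. v \<in> gauss_ints \<Longrightarrow> v' \<in> gauss_ints \<Longrightarrow> R < cmod v \<Longrightarrow> R < cmod v' \<Longrightarrow>
           gauss_residue N v = gauss_residue N v' \<Longrightarrow> a v = a v'"
    using eventually_periodic_residue_determined_far[OF assms(5)] by blast
  ultimately show ?thesis
    using automatic_if_residue_determined_far[OF assms(1,2)] by blast
qed

end
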